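(* Let $(G_a,G_b)\sim ER(n;\mathbf p)$ be correlated graphs on vertex set $V$, let $h\le n-2$, and let $U=\{u_1,u_2\}\subseteq V$. Let $\mathbf w_a^U=f_h(G_a[V\setminus U])$, $\mathbf w_b^U=f_h(G_b[V\setminus U])$, $B_a^U=G_a[U,\mathbf w_a^U]$, $B_b^U=G_b[U,\mathbf w_b^U]$, and let $\mathcal E^H(U)$ be the event $\mathbf w_a^U=\mathbf w_b^U$. Then \[ B_a^U\sim ER(2,h,p_{1*}),\qquad B_b^U\sim ER(2,h,p_{*1}), \] and, conditionally on $\mathcal E^H(U)$, $(B_a^U,B_b^U)\sim ER(2,h,\mathbf p)$.
   Context: Correlated Erdős–Rényi model $ER(n;\mathbf{p})$: $G_a,G_b$ are random graphs on the same $n$-vertex set $V$; for each unordered pair $e$ of distinct vertices, independently, $(\mathbf 1[e\in E(G_a)],\mathbf 1[e\in E(G_b)])$ equals $(1,1),(1,0),(0,1),(0,0)$ with probabilities $p_{11},p_{10},p_{01},p_{00}$; $p_{1*}=p_{11}+p_{10}$, $p_{*1}=p_{11}+p_{01}$. $G[W]$ is the induced subgraph on $W$. $f_h(G)$ is the vector $(w_1,\dots,w_h)$ of $h$ distinct vertices of $G$ such that $\deg_G(w_i)$ equals the $i$-th largest degree of $G$ (ties broken by a fixed rule, so $f_h(G)$ is a function of $G$). For $U\subseteq V$ and a vector $\mathbf w=(w_1,\dots,w_h)$ of distinct vertices of $V\setminus U$, $G[U,\mathbf w]$ is the bipartite graph with left vertex set $U$, right vertex set $[h]$, and edge set $\{(u,j)\in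 U\times[h]:\{u,w_j\}\in E(G)\}$. $ER(2,h,q)$ denotes the random bipartite graph with left set $U$, right set $[h]$, each of the $2h$ possible edges present independently with probability $q$; $ER(2,h,\mathbf p)$ denotes the correlated pair of such bipartite graphs in which for each left–right pair independently the edge indicator pair takes values $(1,1),(1,0),(0,1),(0,0)$ with probabilities $p_{11},p_{10},p_{01},p_{00}$. *)

theory Defs
  imports "HOL-Probability.Probability"
begin

text \<open>A graph on vertex set a subset of nat is given by its edge indicator on
  unordered pairs (2-element sets) of vertices.\<close>

definition edge_pmf :: "real \<Rightarrow> real \<Rightarrow> real \<Rightarrow> real \<Rightarrow> (bool \<times> bool) pmf" where
  "edge_pmf p11 p10 p01 p00 =
     pmf_of_list [((True,True),p11), ((True,False),p10), ((False,True),p01), ((False,False),p00)]"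

definition vpairs :: "nat \<Rightarrow> nat set set" where
  "vpairs n = {{i,j} | i j. i < j \<and> j < n}"

text \<open>Correlated Erdos-Renyi model ER(n;p): an outcome x assigns to each vertex pair e
  the indicator pair (1[e in E(G_a)], 1[e in E(G_b)]).\<close>
definition er_corr :: "nat \<Rightarrow> real \<Rightarrow> real \<Rightarrow> real \<Rightarrow> real \<Rightarrow> (nat set \<Rightarrow> bool \<times> bool) pmf" where
  "er_corr n p11 p10 p01 p00 = Pi_pmf (vpairs n) (False, False) (\<lambda>_. edge_pmf p11 p10 p01 p00)"

definition Ga_of :: "(nat set \<Rightarrow> bool \<times> bool) \<Rightarrow> (nat set \<Rightarrow> bool)" where
  "Ga_of x = (\<lambda>e. fst (x e))"

definition Gb_of :: "(nat set \<Rightarrow> bool \<times> bool) \<Rightarrow> (nat set \<Rightarrow> bool)" where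
  "Gb_of x = (\<lambda>e. snd (x e))"

definition deg :: "(nat set \<Rightarrow> bool) \<Rightarrow> nat set \<Rightarrow> nat \<Rightarrow> nat" where
  "deg G W v = card {u \<in> W. u \<noteq> v \<and> G {v, u}}"

definition kth_largest_deg :: "(nat set \<Rightarrow> bool) \<Rightarrow> nat set \<Rightarrow> nat \<Rightarrow> nat" where
  "kth_largest_deg G W i = rev (sort (map (deg G W) (sorted_list_of_set W))) ! i"

text \<open>F is an admissible top-h selection rule: F W G = f_h(G[W]) is a function of the
  induced graph G[W] only, and it lists h distinct vertices of W whose degrees in G[W]
  are the 1st, ..., h-th largest degrees (ties broken in some fixed way).\<close>
definition top_selector :: "nat \<Rightarrow> (nat set \<Rightarrow> (nat set \<Rightarrow> bool) \<Rightarrow> nat list) \<Rightarrow> bool" where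
  "top_selector h F \<longleftrightarrow>
     (\<forall>W G G'. (\<forall>e. e \<subseteq> W \<longrightarrow> G e = G' e) \<longrightarrow> F W G = F W G') \<and>
     (\<forall>W G. finite W \<and> h \<le> card W \<longrightarrow>
        length (F W G) = h \<and> distinct (F W G) \<and> set (F W G) \<subseteq> W \<and>
        (\<forall>i<h. deg G W (F W G ! i) = kth_largest_deg G W i))"

text \<open>Bipartite graph G[U,w]: left set U, right set {0..<length w}.\<close>
definition bip :: "(nat set \<Rightarrow> bool) \<Rightarrow> nat set \<Rightarrow> nat list \<Rightarrow> (nat \<times> nat) set" where
  "bip G U w = {(u, j). u \<in> U \<and> j < length w \<and> G {u, w ! j}}"

definition er_bip :: "nat set \<Rightarrow> nat \<Rightarrow> real \<Rightarrow> (nat \<times> nat) set pmf" where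
  "er_bip U h q = map_pmf (\<lambda>f. {x \<in> U \<times> {..<h}. f x})
      (Pi_pmf (U \<times> {..<h}) False (\<lambda>_. bernoulli_pmf q))"

definition er_bip2 :: "nat set \<Rightarrow> nat \<Rightarrow> real \<Rightarrow> real \<Rightarrow> real \<Rightarrow> real \<Rightarrow>
    ((nat \<times> nat) set \<times> (nat \<times> nat) set) pmf" where
  "er_bip2 U h p11 p10 p01 p00 = map_pmf
      (\<lambda>f. ({x \<in> U \<times> {..<h}. fst (f x)}, {x \<in> U \<times> {..<h}. snd (f x)}))
      (Pi_pmf (U \<times> {..<h}) (False, False) (\<lambda>_. edge_pmf p11 p10 p01 p00))"

end

theory Submission
  imports Defs
begin

(* Split the vertex pairs into those inside W = V - U and the rest. The selections
   w_a = f_h(G_a[W]) and w_b = f_h(G_b[W]) are functions of the edges inside W, while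
   G[U, w] only reads the 2h pairs {u, w_j}, which lie outside W and are distinct for
   distinct (u, j). So, given the edges inside W, (G_a[U, w], G_b[U, w]) is a fresh copy
   of ER(2,h,p) for every admissible w; in particular B_a and B_b have the stated
   marginal laws whatever w_a and w_b are, and on the event w_a = w_b, which is itself
   determined by the edges inside W, the pair (B_a, B_b) is ER(2,h,p). Only the locality
   of f_h and the shape of its output matter, not that it picks top-degree vertices. *)

lemma map_Pi_pmf_reindex:
  assumes T: "finite T" and inj: "inj_on \<tau> S" and sub: "\<tau> ` S \<subseteq> T"
    and outside: "\<And>x. x \<notin> S \<Longrightarrow> \<tau> x \<notin> T"
  shows "map_pmf (\<lambda>g. g \<circ> \<tau>) (Pi_pmf T d (\<lambda>_. K)) = Pi_pmf S d (\<lambda>_. K)"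
proof -
  have S: "finite S" using finite_imageD[OF finite_subset[OF sub T] inj] .
  have "\<tau> x \<notin> \<tau> ` S" if "x \<notin> S" for x
    using outside[OF that] sub by blast
  then have "Pi_pmf S d (\<lambda>_. K) = map_pmf (\<lambda>g. g \<circ> \<tau>) (Pi_pmf (\<tau> ` S) d (\<lambda>_. K))"
    by (rule Pi_pmf_bij_betw[OF S inj_on_imp_bij_betw[OF inj]])
  also have "\<dots> = map_pmf (\<lambda>g. (\<lambda>x. if x \<in> \<tau> ` S then g x else d) \<circ> \<tau>)
      (Pi_pmf T d (\<lambda>_. K))"
    unfolding Pi_pmf_subset[OF T sub] map_pmf_comp ..
  also have "\<dots> = map_pmf (\<lambda>g. g \<circ> \<tau>) (Pi_pmf T d (\<lambda>_. K))"
  proof (rule map_pmf_cong[OF refl])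
    fix g assume "g \<in> set_pmf (Pi_pmf T d (\<lambda>_. K))"
    then have "g x = d" if "x \<notin> T" for x
      using set_Pi_pmf_subset[OF T, of d "\<lambda>_. K"] that by blast
    then show "(\<lambda>x. if x \<in> \<tau> ` S then g x else d) \<circ> \<tau> = g \<circ> \<tau>"
      using outside by (auto simp: fun_eq_iff)
  qed
  finally show ?thesis by (rule sym)
qed

lemma map_pmf_bind_pmf_const:
  assumes "\<And>x. x \<in> set_pmf P \<Longrightarrow> map_pmf Z (N x) = R"
  shows "map_pmf Z (bind_pmf P N) = R"
  using assms by (simp add: map_bind_pmf cong: bind_pmf_cong)

lemma emeasure_bind_pmf_first_stage:
  assumes "\<And>x y. x \<in> set_pmf P \<Longrightarrow> y \<in> set_pmf (N x) \<Longrightarrow> y \<in> H \<longleftrightarrow> x \<in> E"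
  shows "emeasure (bind_pmf P N) H = emeasure P E"
proof -
  have "AE x in P. emeasure (N x) H = indicator E x"
  proof (rule AE_pmfI)
    fix x assume x: "x \<in> set_pmf P"
    show "emeasure (N x) H = indicator E x"
    proof (cases "x \<in> E")
      case True
      then have "AE y in N x. y \<in> H" using assms[OF x] by (auto intro: AE_pmfI)
      then show ?thesis using True by (simp add: measure_pmf.emeasure_eq_1_AE)
    next
      case False
      then have "AE y in N x. y \<notin> H" using assms[OF x] by (auto intro: AE_pmfI)
      then show ?thesis using False by (simp add: AE_iff_measurable[OF _ refl])
    qed
  qed
  then have "emeasure (bind_pmf P N) H = (\<integral>\<^sup>+x. indicator E x \<partial>P)"
    by (simp add: nn_integral_cong_AE)
  then show ?thesis by simp
qed

lemma cond_bind_pmf_first_stage: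
  assumes H: "\<And>x y. x \<in> set_pmf P \<Longrightarrow> y \<in> set_pmf (N x) \<Longrightarrow> y \<in> H \<longleftrightarrow> x \<in> E"
    and neH: "set_pmf (bind_pmf P N) \<inter> H \<noteq> {}"
  shows "cond_pmf (bind_pmf P N) H = bind_pmf (cond_pmf P E) N"
proof (rule pmf_eqI)
  fix y
  have ne: "set_pmf P \<inter> E \<noteq> {}" using neH H by auto
  have "measure (bind_pmf P N) H = measure P E"
    using emeasure_bind_pmf_first_stage[OF H] by (simp add: measure_def)
  moreover have "measure P E > 0" using ne by (auto intro: measure_pmf_posI)
  ultimately have HE: "emeasure P E = ennreal (measure (bind_pmf P N) H)"
    "measure (bind_pmf P N) H > 0"
    by (simp_all add: measure_pmf.emeasure_eq_measure)
  have "ennreal (pmf (bind_pmf (cond_pmf P E) N) y)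
      = (\<integral>\<^sup>+x. ennreal (pmf (N x) y) * indicator E x \<partial>P) / emeasure P E"
    unfolding ennreal_pmf_bind cond_pmf.rep_eq[OF ne] by (simp add: nn_integral_uniform_measure)
  also have "(\<integral>\<^sup>+x. ennreal (pmf (N x) y) * indicator E x \<partial>P)
      = (\<integral>\<^sup>+x. ennreal (pmf (N x) y) * indicator H y \<partial>P)"
    by (intro nn_integral_cong_AE AE_pmfI) (use H in \<open>auto simp: indicator_def set_pmf_eq\<close>)
  also have "(\<integral>\<^sup>+x. ennreal (pmf (N x) y) * indicator H y \<partial>P) / emeasure P E
      = ennreal (pmf (cond_pmf (bind_pmf P N) H) y)"
    using divide_ennreal[OF pmf_nonneg HE(2), of "bind_pmf P N" y]
    by (cases "y \<in> H") (simp_all add: pmf_cond[OF neH] ennreal_pmf_bind HE(1))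
  finally show "pmf (cond_pmf (bind_pmf P N) H) y = pmf (bind_pmf (cond_pmf P E) N) y"
    by simp
qed

lemma map_cond_bind_pmf_first_stage:
  assumes H: "\<And>x y. x \<in> set_pmf P \<Longrightarrow> y \<in> set_pmf (N x) \<Longrightarrow> y \<in> H \<longleftrightarrow> x \<in> E"
    and neH: "set_pmf (bind_pmf P N) \<inter> H \<noteq> {}"
    and law: "\<And>x. x \<in> set_pmf P \<Longrightarrow> x \<in> E \<Longrightarrow> map_pmf Z (N x) = R"
  shows "map_pmf Z (cond_pmf (bind_pmf P N) H) = R"
proof -
  have ne: "set_pmf P \<inter> E \<noteq> {}" using neH H by auto
  have "map_pmf Z (bind_pmf (cond_pmf P E) N) = R"
    by (rule map_pmf_bind_pmf_const) (simp add: law set_cond_pmf[OF ne])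
  then show ?thesis using cond_bind_pmf_first_stage[OF H neH] by simp
qed

lemma edge_pmf_marginals:
  assumes "p11 \<ge> 0" "p10 \<ge> 0" "p01 \<ge> 0" "p00 \<ge> 0" "p11 + p10 + p01 + p00 = 1"
  shows "map_pmf fst (edge_pmf p11 p10 p01 p00) = bernoulli_pmf (p11 + p10)"
    and "map_pmf snd (edge_pmf p11 p10 p01 p00) = bernoulli_pmf (p11 + p01)"
proof -
  have wf: "pmf_of_list_wf
      [((True, True), p11), ((True, False), p10), ((False, True), p01), ((False, False), p00)]"
    using assms by (auto simp: pmf_of_list_wf_def)
  show "map_pmf fst (edge_pmf p11 p10 p01 p00) = bernoulli_pmf (p11 + p10)"
    "map_pmf snd (edge_pmf p11 p10 p01 p00) = bernoulli_pmf (p11 + p01)"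
    by (intro pmf_eqI, unfold pmf_map edge_pmf_def measure_pmf_of_list[OF wf],
        use assms in \<open>auto split: bool.split\<close>)+
qed

lemma er_bip2_marginals:
  assumes "p11 \<ge> 0" "p10 \<ge> 0" "p01 \<ge> 0" "p00 \<ge> 0" "p11 + p10 + p01 + p00 = 1"
    and "finite U"
  shows "map_pmf fst (er_bip2 U h p11 p10 p01 p00) = er_bip U h (p11 + p10)"
    and "map_pmf snd (er_bip2 U h p11 p10 p01 p00) = er_bip U h (p11 + p01)"
proof -
  have S: "finite (U \<times> {..<h})" using assms(6) by simp
  show "map_pmf fst (er_bip2 U h p11 p10 p01 p00) = er_bip U h (p11 + p10)"
    "map_pmf snd (er_bip2 U h p11 p10 p01 p00) = er_bip U h (p11 + p01)"
    unfolding er_bip_def er_bip2_def edge_pmf_marginals[OF assms(1-5), symmetric]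
      Pi_pmf_map[OF S, of fst "(False, False)" False, simplified]
      Pi_pmf_map[OF S, of snd "(False, False)" False, simplified]
    by (simp_all add: map_pmf_comp o_def)
qed

lemma finite_vpairs: "finite (vpairs n)"
proof (rule finite_subset)
  show "vpairs n \<subseteq> Pow {..<n}" by (auto simp: vpairs_def)
qed simp

lemma doubleton_in_vpairs: "a \<noteq> b \<Longrightarrow> a < n \<Longrightarrow> b < n \<Longrightarrow> {a, b} \<in> vpairs n"
  unfolding vpairs_def by (cases "a < b") (auto, metis insert_commute linorder_neqE_nat)

lemma bip_pair_law:
  fixes w :: "nat list"
  assumes T: "finite T" "{} \<notin> T" and disjoint: "U \<inter> set w = {}"
    and w: "distinct w" "length w = h"
    and pairs: "\<And>u j. u \<in> U \<Longrightarrow> j < h \<Longrightarrow> {u, w ! j} \<in> T"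
  shows "map_pmf (\<lambda>g. (bip (Ga_of g) U w, bip (Gb_of g) U w))
           (Pi_pmf T (False, False) (\<lambda>_. edge_pmf p11 p10 p01 p00))
         = er_bip2 U h p11 p10 p01 p00"
proof -
  define S where "S = U \<times> {..<h}"
  \<comment> \<open>The dummy value \<open>{}\<close> off \<open>S\<close> avoids \<open>T\<close>, as the reindexing requires.\<close>
  define \<tau> where "\<tau> x = (if x \<in> S then {fst x, w ! snd x} else {})" for x
  have "inj_on \<tau> S"
  proof (rule inj_onI)
    fix x y assume xy: "x \<in> S" "y \<in> S" "\<tau> x = \<tau> y"
    obtain u j u' j' where x: "x = (u, j)" "u \<in> U" "j < h"
      and y: "y = (u', j')" "u' \<in> U" "j' < h"
      using xy(1,2) by (auto simp: S_def)
    have "w ! j \<notin> U" "w ! j' \<notin> U" using disjoint w(2) x y by auto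
    then have "u = u' \<and> w ! j = w ! j'"
      using xy(3) x y by (simp add: \<tau>_def S_def) (metis doubleton_eq_iff)
    then show "x = y" using x y w by (simp add: nth_eq_iff_index_eq)
  qed
  moreover have "\<tau> ` S \<subseteq> T" using pairs by (auto simp: \<tau>_def S_def)
  ultimately have reindex:
    "map_pmf (\<lambda>g. g \<circ> \<tau>) (Pi_pmf T (False, False) (\<lambda>_. edge_pmf p11 p10 p01 p00))
      = Pi_pmf S (False, False) (\<lambda>_. edge_pmf p11 p10 p01 p00)"
    using T by (intro map_Pi_pmf_reindex) (auto simp: \<tau>_def)
  have bip: "(bip (Ga_of g) U w, bip (Gb_of g) U w)
      = ({x \<in> S. fst ((g \<circ> \<tau>) x)}, {x \<in> S. snd ((g \<circ> \<tau>) x)})" for g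
    using w(2) by (auto simp: bip_def Ga_of_def Gb_of_def S_def \<tau>_def)
  show ?thesis
    unfolding er_bip2_def S_def[symmetric] reindex[symmetric] map_pmf_comp bip by (simp add: o_def)
qed

type_synonym edge_config = "nat set \<Rightarrow> bool \<times> bool"

locale er_corr_vertex_pair =
  fixes n h u1 u2 :: nat and p11 p10 p01 p00 :: real
    and F :: "nat set \<Rightarrow> (nat set \<Rightarrow> bool) \<Rightarrow> nat list"
  assumes probs: "p11 \<ge> 0" "p10 \<ge> 0" "p01 \<ge> 0" "p00 \<ge> 0" "p11 + p10 + p01 + p00 = 1"
    and vertices: "u1 < n" "u2 < n" "u1 \<noteq> u2"
    and h_le: "h \<le> n - 2"
    and selector: "top_selector h F"
begin

definition W :: "nat set" where
  "W = {..<n} - {u1, u2}"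

definition inner_pairs :: "nat set set" where
  "inner_pairs = {e \<in> vpairs n. e \<subseteq> W}"

definition outer_pairs :: "nat set set" where
  "outer_pairs = vpairs n - inner_pairs"

definition edges_pmf :: "nat set set \<Rightarrow> edge_config pmf" where
  "edges_pmf A = Pi_pmf A (False, False) (\<lambda>_. edge_pmf p11 p10 p01 p00)"

definition override :: "edge_config \<Rightarrow> edge_config \<Rightarrow> edge_config" where
  "override f g = (\<lambda>e. if e \<in> inner_pairs then f e else g e)"

definition completion_pmf :: "edge_config \<Rightarrow> edge_config pmf" where
  "completion_pmf f = map_pmf (override f) (edges_pmf outer_pairs)"

definition selections_agree :: "edge_config set" where
  "selections_agree = {f. F W (Ga_of f) = F W (Gb_of f)}"

definition top_bip ::
    "(edge_config \<Rightarrow> nat set \<Rightarrow> bool) \<Rightarrow> edge_config \<Rightarrow> (nat \<times> nat) set" where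
  "top_bip G x = bip (G x) {u1, u2} (F W (G x))"

lemma er_corr_eq_bind: "er_corr n p11 p10 p01 p00 = bind_pmf (edges_pmf inner_pairs) completion_pmf"
proof -
  have "vpairs n = inner_pairs \<union> outer_pairs" "inner_pairs \<inter> outer_pairs = {}"
    "finite inner_pairs" "finite outer_pairs"
    using finite_vpairs by (auto simp: inner_pairs_def outer_pairs_def)
  then show ?thesis
    unfolding er_corr_def edges_pmf_def completion_pmf_def override_def
    by (simp add: Pi_pmf_union pair_pmf_def map_bind_pmf map_pmf_def bind_assoc_pmf bind_return_pmf)
qed

lemma selection_valid: "length (F W G) = h" "distinct (F W G)" "set (F W G) \<subseteq> W"
proof -
  have "card W = n - 2" using vertices by (simp add: W_def card_Diff_subset)
  then show "length (F W G) = h" "distinct (F W G)" "set (F W G) \<subseteq> W"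
    using selector h_le by (auto simp: top_selector_def W_def)
qed

lemma override_inside:
  assumes "f \<in> set_pmf (edges_pmf inner_pairs)" "g \<in> set_pmf (edges_pmf outer_pairs)" "e \<subseteq> W"
  shows "override f g e = f e"
proof (cases "e \<in> inner_pairs")
  case False
  then have "e \<notin> outer_pairs" using assms(3) by (auto simp: inner_pairs_def outer_pairs_def)
  moreover have "finite inner_pairs" "finite outer_pairs"
    using finite_vpairs by (simp_all add: inner_pairs_def outer_pairs_def)
  ultimately have "f e = (False, False)" "g e = (False, False)"
    using False assms(1,2) set_Pi_pmf_subset[of _ "(False, False)" "\<lambda>_. edge_pmf p11 p10 p01 p00"]
    unfolding edges_pmf_def by blast+
  then show ?thesis by (simp add: override_def)
qed (simp add: override_def)

lemma selection_override:
  assumes "G \<in> {Ga_of, Gb_of}"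
    and "f \<in> set_pmf (edges_pmf inner_pairs)" "g \<in> set_pmf (edges_pmf outer_pairs)"
  shows "F W (G (override f g)) = F W (G f)"
  using selector override_inside[OF assms(2,3)] assms(1)
  unfolding top_selector_def by (auto simp: Ga_of_def Gb_of_def)

lemma selections_agree_completion:
  assumes "f \<in> set_pmf (edges_pmf inner_pairs)" "x \<in> set_pmf (completion_pmf f)"
  shows "F W (Ga_of x) = F W (Gb_of x) \<longleftrightarrow> f \<in> selections_agree"
proof -
  obtain g where "g \<in> set_pmf (edges_pmf outer_pairs)" "x = override f g"
    using assms(2) by (auto simp: completion_pmf_def)
  then show ?thesis
    using selection_override[OF _ assms(1)] by (simp add: selections_agree_def)
qed

lemma top_bip_override:
  assumes "G \<in> {Ga_of, Gb_of}"
    and "f \<in> set_pmf (edges_pmf inner_pairs)" "g \<in> set_pmf (edges_pmf outer_pairs)"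
  shows "top_bip G (override f g) = bip (G g) {u1, u2} (F W (G f))"
proof -
  note selection_override[OF assms]
  moreover have "{u, w ! j} \<notin> inner_pairs" if "u \<in> {u1, u2}" "set w \<subseteq> W" "j < length w" for u w j
    using that by (auto simp: inner_pairs_def W_def)
  ultimately show ?thesis
    using selection_valid(3) assms(1)
    by (auto simp: top_bip_def bip_def override_def Ga_of_def Gb_of_def)
qed

lemma outer_bip_law:
  assumes "length w = h" "distinct w" "set w \<subseteq> W"
  shows "map_pmf (\<lambda>g. (bip (Ga_of g) {u1, u2} w, bip (Gb_of g) {u1, u2} w))
           (edges_pmf outer_pairs) = er_bip2 {u1, u2} h p11 p10 p01 p00"
  unfolding edges_pmf_def
proof (rule bip_pair_law)
  show "finite outer_pairs" using finite_vpairs by (simp add: outer_pairs_def)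
  show "{} \<notin> outer_pairs" by (auto simp: outer_pairs_def vpairs_def)
  show "{u1, u2} \<inter> set w = {}" using assms(3) by (auto simp: W_def)
  show "{u, w ! j} \<in> outer_pairs" if "u \<in> {u1, u2}" "j < h" for u j
  proof -
    have "w ! j \<in> W" using that assms(1,3) by auto
    then have "u \<noteq> w ! j" "w ! j < n" "u < n" using that vertices by (auto simp: W_def)
    then have "{u, w ! j} \<in> vpairs n" by (simp add: doubleton_in_vpairs)
    then show ?thesis using that by (auto simp: outer_pairs_def inner_pairs_def W_def)
  qed
qed (use assms in auto)

lemma top_bip_laws_given_inner_edges:
  assumes f: "f \<in> set_pmf (edges_pmf inner_pairs)"
  shows "map_pmf (top_bip Ga_of) (completion_pmf f) = er_bip {u1, u2} h (p11 + p10)"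
    and "map_pmf (top_bip Gb_of) (completion_pmf f) = er_bip {u1, u2} h (p11 + p01)"
    and "f \<in> selections_agree \<Longrightarrow>
         map_pmf (\<lambda>x. (top_bip Ga_of x, top_bip Gb_of x)) (completion_pmf f)
           = er_bip2 {u1, u2} h p11 p10 p01 p00"
proof -
  let ?bips = "\<lambda>w g. (bip (Ga_of g) {u1, u2} w, bip (Gb_of g) {u1, u2} w)"
  have law: "map_pmf (?bips (F W G)) (edges_pmf outer_pairs) = er_bip2 {u1, u2} h p11 p10 p01 p00"
    for G
    using outer_bip_law[OF selection_valid] .
  have N: "map_pmf Z (completion_pmf f) = map_pmf (\<lambda>g. Z (override f g)) (edges_pmf outer_pairs)"
    for Z :: "_ \<Rightarrow> 'a"
    unfolding completion_pmf_def map_pmf_comp ..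
  have "map_pmf (top_bip Ga_of) (completion_pmf f)
      = map_pmf fst (map_pmf (?bips (F W (Ga_of f))) (edges_pmf outer_pairs))"
    unfolding N map_pmf_comp using top_bip_override[OF _ f] by (intro map_pmf_cong) auto
  then show "map_pmf (top_bip Ga_of) (completion_pmf f) = er_bip {u1, u2} h (p11 + p10)"
    unfolding law using er_bip2_marginals(1)[OF probs] by simp
  have "map_pmf (top_bip Gb_of) (completion_pmf f)
      = map_pmf snd (map_pmf (?bips (F W (Gb_of f))) (edges_pmf outer_pairs))"
    unfolding N map_pmf_comp using top_bip_override[OF _ f] by (intro map_pmf_cong) auto
  then show "map_pmf (top_bip Gb_of) (completion_pmf f) = er_bip {u1, u2} h (p11 + p01)"
    unfolding law using er_bip2_marginals(2)[OF probs] by simp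
  assume "f \<in> selections_agree"
  then have "map_pmf (\<lambda>x. (top_bip Ga_of x, top_bip Gb_of x)) (completion_pmf f)
      = map_pmf (?bips (F W (Ga_of f))) (edges_pmf outer_pairs)"
    unfolding N using top_bip_override[OF _ f] by (intro map_pmf_cong) (auto simp: selections_agree_def)
  then show "map_pmf (\<lambda>x. (top_bip Ga_of x, top_bip Gb_of x)) (completion_pmf f)
      = er_bip2 {u1, u2} h p11 p10 p01 p00"
    unfolding law .
qed

end

theorem lemma4p12:
  fixes n h u1 u2 :: nat and p11 p10 p01 p00 :: real
    and F :: "nat set \<Rightarrow> (nat set \<Rightarrow> bool) \<Rightarrow> nat list"
  assumes "p11 \<ge> 0" "p10 \<ge> 0" "p01 \<ge> 0" "p00 \<ge> 0" "p11 + p10 + p01 + p00 = 1"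
    and "u1 < n" "u2 < n" "u1 \<noteq> u2" "h \<le> n - 2"
    and "top_selector h F"
  defines "M \<equiv> er_corr n p11 p10 p01 p00"
    and "Ba \<equiv> (\<lambda>x. bip (Ga_of x) {u1, u2} (F ({..<n} - {u1, u2}) (Ga_of x)))"
    and "Bb \<equiv> (\<lambda>x. bip (Gb_of x) {u1, u2} (F ({..<n} - {u1, u2}) (Gb_of x)))"
    and "EH \<equiv> {x. F ({..<n} - {u1, u2}) (Ga_of x) = F ({..<n} - {u1, u2}) (Gb_of x)}"
  shows "map_pmf Ba M = er_bip {u1, u2} h (p11 + p10) \<and>
         map_pmf Bb M = er_bip {u1, u2} h (p11 + p01) \<and>
         (measure_pmf.prob M EH > 0 \<longrightarrow>
           map_pmf (\<lambda>x. (Ba x, Bb x)) (cond_pmf M EH) = er_bip2 {u1, u2} h p11 p10 p01 p00)"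
proof -
  interpret S: er_corr_vertex_pair n h u1 u2 p11 p10 p01 p00 F
    using assms(1-10) by unfold_locales
  have M: "M = bind_pmf (S.edges_pmf S.inner_pairs) S.completion_pmf"
    unfolding M_def by (rule S.er_corr_eq_bind)
  have B: "Ba = S.top_bip Ga_of" "Bb = S.top_bip Gb_of"
    unfolding Ba_def Bb_def S.top_bip_def S.W_def by simp_all
  have EH: "x \<in> EH \<longleftrightarrow> f \<in> S.selections_agree"
    if "f \<in> set_pmf (S.edges_pmf S.inner_pairs)" "x \<in> set_pmf (S.completion_pmf f)" for f x
    using S.selections_agree_completion[OF that] by (simp add: EH_def S.W_def)
  show ?thesis
  proof (intro conjI impI)
    show "map_pmf Ba M = er_bip {u1, u2} h (p11 + p10)"
      unfolding M B by (rule map_pmf_bind_pmf_const) (rule S.top_bip_laws_given_inner_edges(1))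
    show "map_pmf Bb M = er_bip {u1, u2} h (p11 + p01)"
      unfolding M B by (rule map_pmf_bind_pmf_const) (rule S.top_bip_laws_given_inner_edges(2))
    assume "measure_pmf.prob M EH > 0"
    then have nonnull: "set_pmf (bind_pmf (S.edges_pmf S.inner_pairs) S.completion_pmf) \<inter> EH \<noteq> {}"
      using measure_pmf_zero_iff[of M EH] by (auto simp: M)
    from EH nonnull S.top_bip_laws_given_inner_edges(3)
    show "map_pmf (\<lambda>x. (Ba x, Bb x)) (cond_pmf M EH) = er_bip2 {u1, u2} h p11 p10 p01 p00"
      unfolding M B by (rule map_cond_bind_pmf_first_stage)
  qed
qed

end
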